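(* The homomorphism $C_2^{\rm lb}(X)\to\mathbb Z_p$ defined on generators by \[ ((a,b),(a,c))\longmapsto (a-b)\,\frac{(a-b+2c)^p+(a+b)^p-2(a+c)^p}{p} \] (computed with integer lifts of $a,b,c$, the numerator in $\mathbb Z$ being divisible by $p$, then reduced mod $p$) vanishes on $D_2^{\rm lb}(X)+D_2^{\rm lb}(X,\rho)$, and the induced homomorphism $\theta_p:C_2^{\rm SLB}(X)\to\mathbb Z_p$ is a $2$-cocycle, i.e. $\theta_p\circ\partial_3^{\rm SLB}=0$.
   Context: Let $p$ be an odd prime, $X=\mathbb Z_p$, and $[a,b,c]=a-b+c$. Let $\rho((a,b))=(b,a)$, $(a,b)\,\underline{\star}\,(a,c)=(c,[a,b,c])$, $(a,b)\,\overline{\star}\,(a,c)=(c,[a,c,b])$. For $n\ge1$ let $C_n^{\rm lb}(X)$ be the free abelian group on tuples $((a,b_1),\dots,(a,b_n))$, $a,b_i\in X$ ($C_n^{\rm lb}=0$ for $n\le0$), with boundary for $n\ge2$ \[ \partial_n^{\rm lb}((a,b_1),\dots,(a,b_n))=\sum_{i=1}^n(-1)^i\Big\{((a,b_1),\dots,\widehat{(a,b_i)},\dots,(a,b_n))-\big((b_i,[a,b_1,b_i]),\dots,(b_i,[a,b_{i-1},b_i]),(b_i,[a,b_i,b_{i+1}]),\dots,(b_i,[a,b_i,b_n])\big)\Big\} \] and $\partial_n^{\rm lb}=0$ for $n\le1$. Let $D_n^{\rm lb}(X)$ be generated by tuples with $b_i=b_{i+1}$ for some $i$, and $D_n^{\rm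 lb}(X,\rho)$ generated by all $((a,b_1),\dots,(a,b_n))+((a,b_1)\underline\star(a,b_i),\dots,(a,b_{i-1})\underline\star(a,b_i),\rho((a,b_i)),(a,b_{i+1})\overline\star(a,b_i),\dots,(a,b_n)\overline\star(a,b_i))$. Both are subcomplexes, and $C_n^{\rm SLB}(X)=C_n^{\rm lb}(X)/(D_n^{\rm lb}(X)+D_n^{\rm lb}(X,\rho))$ with the induced boundary $\partial_n^{\rm SLB}$ is a chain complex. *)

theory Defs
  imports Main "HOL-Computational_Algebra.Primes"
begin

text \<open>X = Z_p is represented by the integers {0..<p}; all operations are reduced mod p.
A generator ((a,b_1),...,(a,b_n)) of C_n^lb(X) is represented by the pair (a, [b_1,...,b_n]).
Since X is finite, the free abelian group C_n^lb(X) is the group of all integer-valued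
functions on the (finite) set of generators; we represent chains as functions
(int \<times> int list) \<Rightarrow> int vanishing outside the generator set.\<close>

definition Xset :: "int \<Rightarrow> int set" where
  "Xset p = {0..<p}"

definition tern :: "int \<Rightarrow> int \<Rightarrow> int \<Rightarrow> int \<Rightarrow> int" where
  "tern p a b c = (a - b + c) mod p"

definition gens :: "int \<Rightarrow> nat \<Rightarrow> (int \<times> int list) set" where
  "gens p n = {(a, bs). a \<in> Xset p \<and> length bs = n \<and> set bs \<subseteq> Xset p}"

definition chains :: "int \<Rightarrow> nat \<Rightarrow> ((int \<times> int list) \<Rightarrow> int) set" where
  "chains p n = {c. \<forall>g. g \<notin> gens p n \<longrightarrow> c g = 0}"

definition single :: "(int \<times> int list) \<Rightarrow> ((int \<times> int list) \<Rightarrow> int)" where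
  "single g = (\<lambda>h. if h = g then 1 else 0)"

definition face2 :: "int \<Rightarrow> int \<Rightarrow> int list \<Rightarrow> nat \<Rightarrow> int \<times> int list" where
  "face2 p a bs i = (bs ! i,
      map (\<lambda>bj. tern p a bj (bs ! i)) (take i bs) @
      map (\<lambda>bj. tern p a (bs ! i) bj) (drop (Suc i) bs))"

text \<open>Boundary of a single generator (n \<ge> 2), as a chain; the index i in the paper
is i+1 here, so the sign (-1)^i becomes (-1)^(i+1).\<close>
definition bd_gen :: "int \<Rightarrow> (int \<times> int list) \<Rightarrow> ((int \<times> int list) \<Rightarrow> int)" where
  "bd_gen p g = (case g of (a, bs) \<Rightarrow>
     (if length bs \<le> 1 then (\<lambda>_. 0) else
      (\<lambda>h. \<Sum>i<length bs. (-1) ^ (i + 1) *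
          (single (a, take i bs @ drop (Suc i) bs) h - single (face2 p a bs i) h))))"

definition bd :: "int \<Rightarrow> nat \<Rightarrow> ((int \<times> int list) \<Rightarrow> int) \<Rightarrow> ((int \<times> int list) \<Rightarrow> int)" where
  "bd p n c = (\<lambda>h. \<Sum>g\<in>gens p n. c g * bd_gen p g h)"

definition Dgens_deg :: "int \<Rightarrow> nat \<Rightarrow> ((int \<times> int list) \<Rightarrow> int) set" where
  "Dgens_deg p n = {single (a, bs) | a bs. (a, bs) \<in> gens p n \<and>
       (\<exists>i. Suc i < n \<and> bs ! i = bs ! Suc i)}"

text \<open>Generators of D_n^lb(X,rho):
 ((a,b_1),...,(a,b_n)) + ((a,b_1) under-star (a,b_i),...,rho((a,b_i)),...,(a,b_n) over-star (a,b_i)),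
 where (a,b_j) under-star (a,b_i) = (b_i,[a,b_j,b_i]), rho(a,b_i) = (b_i,a),
 (a,b_j) over-star (a,b_i) = (b_i,[a,b_i,b_j]).\<close>
definition rho_tuple :: "int \<Rightarrow> int \<Rightarrow> int list \<Rightarrow> nat \<Rightarrow> int \<times> int list" where
  "rho_tuple p a bs i = (bs ! i,
      map (\<lambda>bj. tern p a bj (bs ! i)) (take i bs) @ [a] @
      map (\<lambda>bj. tern p a (bs ! i) bj) (drop (Suc i) bs))"

definition Dgens_rho :: "int \<Rightarrow> nat \<Rightarrow> ((int \<times> int list) \<Rightarrow> int) set" where
  "Dgens_rho p n = {(\<lambda>h. single (a, bs) h + single (rho_tuple p a bs i) h) | a bs i.
       (a, bs) \<in> gens p n \<and> i < n}"

inductive_set zspan :: "('a \<Rightarrow> int) set \<Rightarrow> ('a \<Rightarrow> int) set" for G where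
  zero: "(\<lambda>_. 0) \<in> zspan G"
| add: "x \<in> zspan G \<Longrightarrow> g \<in> G \<Longrightarrow> (\<lambda>h. x h + g h) \<in> zspan G"
| sub: "x \<in> zspan G \<Longrightarrow> g \<in> G \<Longrightarrow> (\<lambda>h. x h - g h) \<in> zspan G"

definition theta_num :: "int \<Rightarrow> int \<Rightarrow> int \<Rightarrow> int \<Rightarrow> int" where
  "theta_num p a b c = (a - b + 2 * c) ^ nat p + (a + b) ^ nat p - 2 * (a + c) ^ nat p"

definition theta_gen :: "int \<Rightarrow> int \<Rightarrow> int \<Rightarrow> int \<Rightarrow> int" where
  "theta_gen p a b c = ((a - b) * (theta_num p a b c div p)) mod p"

definition theta :: "int \<Rightarrow> ((int \<times> int list) \<Rightarrow> int) \<Rightarrow> int" where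
  "theta p c = (\<Sum>g\<in>gens p 2. c g * (case g of (a, bs) \<Rightarrow> theta_gen p a (bs ! 0) (bs ! 1))) mod p"

end

theory Submission
  imports Defs "HOL-Number_Theory.Number_Theory"
begin

text \<open>By Fermat, the numerator is congruent mod p to (a-b+2c) + (a+b) - 2(a+c) = 0. Since
x \<equiv> y (mod p) implies x^p \<equiv> y^p (mod p^2), the quotient numerator/p is well defined
mod p on residue classes, so theta_p can be computed with arbitrary integer lifts and
the ternary operation replaced by a - b + c. Over the integers the two relations of
D(X,\<rho>) become exact antisymmetries of the lifted value, and the cocycle condition becomes
a polynomial identity.\<close>

lemma cong_pow_prime_self_int:
  fixes p x :: int
  assumes "prime p"
  shows "[x ^ nat p = x] (mod p)"
proof -
  have p0: "p > 0" using assms prime_gt_0_int by blast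
  define k where "k = nat (x mod p)"
  have "[int k ^ nat p = int k] (mod p)"
  proof (cases "k = 0")
    case True
    then show ?thesis using p0 by (simp add: cong_def power_0_left)
  next
    case False
    have "\<not> nat p dvd k" using False p0 by (intro nat_dvd_not_less) (simp_all add: k_def)
    with assms have "[k ^ (nat p - 1) = 1] (mod nat p)" by (intro fermat_theorem) simp_all
    then have "[k ^ (nat p - 1) * k = k] (mod nat p)" using cong_scalar_right by fastforce
    moreover have "k ^ (nat p - 1) * k = k ^ nat p" using p0 by (intro power_minus_mult) simp
    ultimately have "[int (k ^ nat p) = int k] (mod int (nat p))" by (simp only: cong_int_iff)
    then show ?thesis using p0 by simp
  qed
  moreover have "[x = int k] (mod p)" using p0 by (simp add: k_def cong_def)
  ultimately show ?thesis by (metis cong_pow cong_sym cong_trans)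
qed

lemma cong_pow_square:
  fixes n x y :: int
  assumes "n > 0" "[x = y] (mod n)"
  shows "[x ^ nat n = y ^ nat n] (mod n\<^sup>2)"
proof -
  define m where "m = nat n"
  have "[(\<Sum>i<m. y ^ (m - Suc i) * x ^ i) = (\<Sum>i<m. x ^ (m - Suc i) * x ^ i)] (mod n)"
    using assms(2) by (intro cong_sum cong_mult cong_pow) (auto simp: cong_sym)
  also have "(\<Sum>i<m. x ^ (m - Suc i) * x ^ i) = n * x ^ (m - 1)"
    using assms(1) by (simp add: m_def power_add[symmetric])
  finally have "n dvd (\<Sum>i<m. y ^ (m - Suc i) * x ^ i)" by (simp add: cong_dvd_iff)
  moreover have "n dvd x - y" using assms(2) by (simp add: cong_iff_dvd_diff)
  ultimately have "n * n dvd (x - y) * (\<Sum>i<m. y ^ (m - Suc i) * x ^ i)"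
    by (simp add: mult_dvd_mono)
  then show ?thesis
    by (simp add: cong_iff_dvd_diff power_diff_sumr2 m_def power2_eq_square)
qed

lemma theta_num_dvd:
  fixes p :: int
  assumes "prime p"
  shows "p dvd theta_num p a b c"
proof -
  have "[theta_num p a b c = (a - b + 2 * c) + (a + b) - 2 * (a + c)] (mod p)"
    unfolding theta_num_def
    by (intro cong_add cong_diff cong_mult cong_refl cong_pow_prime_self_int assms)
  then show ?thesis by (simp add: cong_0_iff)
qed

lemma theta_num_cong_square:
  fixes p :: int
  assumes "prime p" "[a = a'] (mod p)" "[b = b'] (mod p)" "[c = c'] (mod p)"
  shows "[theta_num p a b c = theta_num p a' b' c'] (mod p\<^sup>2)"
proof -
  have "p > 0" using assms(1) prime_gt_0_int by blast
  then show ?thesis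
    unfolding theta_num_def
    by (intro cong_add cong_diff cong_mult cong_refl cong_pow_square assms)
qed

definition theta_int :: "int \<Rightarrow> int \<Rightarrow> int \<Rightarrow> int \<Rightarrow> int" where
  "theta_int p a b c = (a - b) * (theta_num p a b c div p)"

lemma mult_theta_int:
  fixes p :: int
  assumes "prime p"
  shows "p * theta_int p a b c = (a - b) * theta_num p a b c"
  using theta_num_dvd[OF assms] by (simp add: theta_int_def mult.left_commute)

lemma theta_gen_cong_theta_int:
  fixes p :: int
  assumes "prime p" "[a = a'] (mod p)" "[b = b'] (mod p)" "[c = c'] (mod p)"
  shows "[theta_gen p a b c = theta_int p a' b' c'] (mod p)"
proof -
  have p0: "p \<noteq> 0" using assms(1) by auto
  obtain q where q: "theta_num p a b c = p * q" using theta_num_dvd[OF assms(1)] by blast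
  obtain q' where q': "theta_num p a' b' c' = p * q'" using theta_num_dvd[OF assms(1)] by blast
  have "p * p dvd p * (q - q')"
    using theta_num_cong_square[OF assms] q q'
    by (simp add: cong_iff_dvd_diff power2_eq_square right_diff_distrib)
  then have "[q = q'] (mod p)" using p0 by (simp add: cong_iff_dvd_diff)
  then have "[(a - b) * q = (a' - b') * q'] (mod p)"
    by (intro cong_mult cong_diff assms(2,3))
  then show ?thesis
    using q q' p0 by (simp add: theta_gen_def theta_int_def cong_def)
qed

lemma theta_int_swap_left: "theta_int p b a (a - b + c) = - theta_int p a b c"
proof -
  have "theta_num p b a (a - b + c) = theta_num p a b c"
    by (simp add: theta_num_def algebra_simps)
  then show ?thesis by (simp add: theta_int_def algebra_simps)
qed

lemma theta_int_swap_right: "theta_int p c (a - b + c) a = - theta_int p a b c"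
proof -
  have "theta_num p c (a - b + c) a = theta_num p a b c"
    by (simp add: theta_num_def algebra_simps)
  then show ?thesis by (simp add: theta_int_def algebra_simps)
qed

text \<open>Once the arguments of the p-th powers are normalised, only seven distinct powers
remain and the identity is linear in them.\<close>

lemma theta_num_cocycle:
  "- ((a - y) * theta_num p a y z - (x - (a - x + y)) * theta_num p x (a - x + y) (a - x + z))
   + ((a - x) * theta_num p a x z - (y - (a - x + y)) * theta_num p y (a - x + y) (a - y + z))
   - ((a - x) * theta_num p a x y - (z - (a - x + z)) * theta_num p z (a - x + z) (a - y + z))
   = 0"
  by (simp add: theta_num_def algebra_simps)

lemma theta_int_cocycle:
  fixes p :: int
  assumes "prime p"
  shows "- (theta_int p a y z - theta_int p x (a - x + y) (a - x + z))
   + (theta_int p a x z - theta_int p y (a - x + y) (a - y + z))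
   - (theta_int p a x y - theta_int p z (a - x + z) (a - y + z)) = 0"
proof -
  have "p * (- (theta_int p a y z - theta_int p x (a - x + y) (a - x + z))
      + (theta_int p a x z - theta_int p y (a - x + y) (a - y + z))
      - (theta_int p a x y - theta_int p z (a - x + z) (a - y + z))) = 0"
    using theta_num_cocycle[of a y p z x]
    by (simp only: right_diff_distrib distrib_left mult_minus_right mult_theta_int[OF assms])
  then show ?thesis using assms by auto
qed

lemma finite_gens: "finite (gens p n)"
proof (rule finite_subset)
  show "gens p n \<subseteq> Xset p \<times> {bs. set bs \<subseteq> Xset p \<and> length bs = n}"
    by (auto simp: gens_def)
  show "finite (Xset p \<times> {bs. set bs \<subseteq> Xset p \<and> length bs = n})"
    by (intro finite_cartesian_product finite_lists_length_eq) (simp_all add: Xset_def)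
qed

lemma tern_in_Xset: "p > 0 \<Longrightarrow> tern p a b c \<in> Xset p"
  by (simp add: tern_def Xset_def)

lemma cong_tern: "[tern p a b c = a - b + c] (mod p)"
  by (simp add: tern_def cong_def)

definition theta_val :: "int \<Rightarrow> int \<times> int list \<Rightarrow> int" where
  "theta_val p g = (case g of (a, bs) \<Rightarrow> theta_gen p a (bs ! 0) (bs ! 1))"

definition theta_sum :: "int \<Rightarrow> ((int \<times> int list) \<Rightarrow> int) \<Rightarrow> int" where
  "theta_sum p c = (\<Sum>g\<in>gens p 2. c g * theta_val p g)"

lemma theta_eq_theta_sum_mod: "theta p c = theta_sum p c mod p"
  by (simp add: theta_def theta_sum_def theta_val_def)

lemma theta_sum_single:
  assumes "g \<in> gens p 2"
  shows "theta_sum p (single g) = theta_val p g"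
proof -
  have eq: "(\<lambda>h. single g h * theta_val p h) = (\<lambda>h. if h = g then theta_val p h else 0)"
    by (auto simp: single_def)
  show ?thesis unfolding theta_sum_def eq using assms by (simp add: finite_gens)
qed

lemma theta_sum_zero: "theta_sum p (\<lambda>_. 0) = 0"
  by (simp add: theta_sum_def)

lemma theta_sum_add: "theta_sum p (\<lambda>h. x h + y h) = theta_sum p x + theta_sum p y"
  by (simp add: theta_sum_def sum.distrib algebra_simps)

lemma theta_sum_diff: "theta_sum p (\<lambda>h. x h - y h) = theta_sum p x - theta_sum p y"
  by (simp add: theta_sum_def sum_subtractf algebra_simps)

lemma theta_sum_uminus: "theta_sum p (\<lambda>h. - x h) = - theta_sum p x"
  by (simp add: theta_sum_def sum_negf)

lemma theta_sum_bd:
  "theta_sum p (bd p 3 c) = (\<Sum>g\<in>gens p 3. c g * theta_sum p (bd_gen p g))"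
proof -
  have "theta_sum p (bd p 3 c)
      = (\<Sum>h\<in>gens p 2. \<Sum>g\<in>gens p 3. c g * (bd_gen p g h * theta_val p h))"
    by (simp add: theta_sum_def bd_def sum_distrib_right mult.assoc)
  also have "\<dots> = (\<Sum>g\<in>gens p 3. \<Sum>h\<in>gens p 2. c g * (bd_gen p g h * theta_val p h))"
    by (rule sum.swap)
  finally show ?thesis by (simp add: theta_sum_def sum_distrib_left)
qed

lemma length2_cases: "length bs = 2 \<Longrightarrow> \<exists>x y. bs = [x, y]"
  by (cases bs; cases "tl bs"; auto)

lemma length3_cases: "length bs = 3 \<Longrightarrow> \<exists>x y z. bs = [x, y, z]"
  by (cases bs; cases "tl bs"; cases "tl (tl bs)"; auto)

lemma theta_sum_Dgens_deg:
  assumes "g \<in> Dgens_deg p 2"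
  shows "theta_sum p g = 0"
proof -
  obtain a bs where g: "g = single (a, bs)" and gen: "(a, bs) \<in> gens p 2"
    and eq: "bs ! Suc 0 = bs ! 0"
    using assms unfolding Dgens_deg_def by force
  have "theta_num p a (bs ! 0) (bs ! 0) = 0"
    by (simp add: theta_num_def algebra_simps)
  then show ?thesis
    using theta_sum_single[OF gen] by (simp add: g eq theta_val_def theta_gen_def)
qed

lemma theta_sum_Dgens_rho_dvd:
  assumes "prime p" "g \<in> Dgens_rho p 2"
  shows "p dvd theta_sum p g"
proof -
  have p0: "p > 0" using assms(1) prime_gt_0_int by blast
  obtain a bs i where g: "g = (\<lambda>h. single (a, bs) h + single (rho_tuple p a bs i) h)"
    and gen: "(a, bs) \<in> gens p 2" and i: "i < 2"
    using assms(2) unfolding Dgens_rho_def by blast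
  have "length bs = 2" using gen by (simp add: gens_def)
  then obtain x y where bs: "bs = [x, y]" using length2_cases by blast
  have Xs: "a \<in> Xset p" "x \<in> Xset p" "y \<in> Xset p" "tern p a x y \<in> Xset p"
    using gen bs tern_in_Xset[OF p0] by (auto simp: gens_def)
  have lift: "[theta_gen p a x y = theta_int p a x y] (mod p)"
    by (intro theta_gen_cong_theta_int assms(1) cong_refl)
  consider "rho_tuple p a bs i = (x, [a, tern p a x y])"
    | "rho_tuple p a bs i = (y, [tern p a x y, a])"
    using i bs by (cases i) (auto simp: rho_tuple_def)
  then show ?thesis
  proof cases
    case 1
    then have "theta_sum p g = theta_gen p a x y + theta_gen p x a (tern p a x y)"
      using theta_sum_single[OF gen] theta_sum_single[of "rho_tuple p a bs i"] Xs
      by (simp add: g bs theta_sum_add theta_val_def gens_def)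
    also have "[\<dots> = theta_int p a x y + theta_int p x a (a - x + y)] (mod p)"
      by (intro cong_add lift theta_gen_cong_theta_int assms(1) cong_refl cong_tern)
    finally show ?thesis by (simp add: theta_int_swap_left cong_0_iff)
  next
    case 2
    then have "theta_sum p g = theta_gen p a x y + theta_gen p y (tern p a x y) a"
      using theta_sum_single[OF gen] theta_sum_single[of "rho_tuple p a bs i"] Xs
      by (simp add: g bs theta_sum_add theta_val_def gens_def)
    also have "[\<dots> = theta_int p a x y + theta_int p y (a - x + y) a] (mod p)"
      by (intro cong_add lift theta_gen_cong_theta_int assms(1) cong_refl cong_tern)
    finally show ?thesis by (simp add: theta_int_swap_right cong_0_iff)
  qed
qed

lemma theta_sum_zspan_dvd:
  assumes "prime p" "c \<in> zspan (Dgens_deg p 2 \<union> Dgens_rho p 2)"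
  shows "p dvd theta_sum p c"
  using assms(2)
proof induction
  case zero
  then show ?case by (simp add: theta_sum_zero)
next
  case (add x g)
  then show ?case
    using theta_sum_Dgens_deg theta_sum_Dgens_rho_dvd[OF assms(1)] by (auto simp: theta_sum_add)
next
  case (sub x g)
  then show ?case
    using theta_sum_Dgens_deg theta_sum_Dgens_rho_dvd[OF assms(1)] by (auto simp: theta_sum_diff)
qed

lemma theta_sum_bd_gen_dvd:
  assumes "prime p" "(a, bs) \<in> gens p 3"
  shows "p dvd theta_sum p (bd_gen p (a, bs))"
proof -
  have p0: "p > 0" using assms(1) prime_gt_0_int by blast
  have "length bs = 3" using assms(2) by (simp add: gens_def)
  then obtain x y z where bs: "bs = [x, y, z]" using length3_cases by blast
  define d0 d1 d2 where "d0 = (a, [y, z])" and "d1 = (a, [x, z])" and "d2 = (a, [x, y])"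
  define f0 f1 f2 where "f0 = (x, [tern p a x y, tern p a x z])"
    and "f1 = (y, [tern p a x y, tern p a y z])" and "f2 = (z, [tern p a x z, tern p a y z])"
  note defs = d0_def d1_def d2_def f0_def f1_def f2_def
  have gen: "d0 \<in> gens p 2" "d1 \<in> gens p 2" "d2 \<in> gens p 2"
    "f0 \<in> gens p 2" "f1 \<in> gens p 2" "f2 \<in> gens p 2"
    using assms(2) bs tern_in_Xset[OF p0] by (auto simp: gens_def defs)
  have "bd_gen p (a, bs) = (\<lambda>h. - (single d0 h - single f0 h) + (single d1 h - single f1 h)
      - (single d2 h - single f2 h))"
    by (rule ext) (simp add: bs bd_gen_def face2_def numeral_3_eq_3 defs)
  then have "theta_sum p (bd_gen p (a, bs)) = - (theta_val p d0 - theta_val p f0)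
      + (theta_val p d1 - theta_val p f1) - (theta_val p d2 - theta_val p f2)"
    by (simp only: theta_sum_add theta_sum_diff theta_sum_uminus theta_sum_single gen)
  also have "\<dots> = - (theta_gen p a y z - theta_gen p x (tern p a x y) (tern p a x z))
      + (theta_gen p a x z - theta_gen p y (tern p a x y) (tern p a y z))
      - (theta_gen p a x y - theta_gen p z (tern p a x z) (tern p a y z))"
    by (simp add: theta_val_def defs)
  also have "[\<dots> = - (theta_int p a y z - theta_int p x (a - x + y) (a - x + z))
      + (theta_int p a x z - theta_int p y (a - x + y) (a - y + z))
      - (theta_int p a x y - theta_int p z (a - x + z) (a - y + z))] (mod p)"
    by (intro cong_add cong_diff cong_minus_minus_iff[THEN iffD2] theta_gen_cong_theta_int
        assms(1) cong_refl cong_tern)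
  finally show ?thesis by (simp only: theta_int_cocycle[OF assms(1)] cong_0_iff)
qed

theorem lemma3p3:
  fixes p :: int
  assumes "prime p" and "odd p"
  shows "(\<forall>a b c. p dvd theta_num p a b c)
    \<and> (\<forall>c \<in> zspan (Dgens_deg p 2 \<union> Dgens_rho p 2). theta p c = 0)
    \<and> (\<forall>c \<in> chains p 3. theta p (bd p 3 c) = 0)"
proof (intro conjI allI ballI)
  fix a b c
  show "p dvd theta_num p a b c" using assms(1) by (rule theta_num_dvd)
next
  fix c
  assume "c \<in> zspan (Dgens_deg p 2 \<union> Dgens_rho p 2)"
  then show "theta p c = 0"
    using theta_sum_zspan_dvd[OF assms(1)] by (simp add: theta_eq_theta_sum_mod)
next
  fix c
  have "p dvd theta_sum p (bd p 3 c)"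
    unfolding theta_sum_bd
    by (auto intro!: dvd_sum dvd_mult theta_sum_bd_gen_dvd assms(1))
  then show "theta p (bd p 3 c) = 0" by (simp add: theta_eq_theta_sum_mod)
qed

end
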